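(* (Equivalence of CPL natural deduction and sequent calculus.) Fix a set $W$ of worlds with a converse well-founded accessibility relation $\prec$. For every context $\Gamma$, proposition $A$ and world $w$: $\Gamma \vdash_{\mathbf{CPL}} A[w]$ if and only if $\Gamma \Rightarrow A[w]$.
   Context: Fix a set $W$ of worlds and a binary accessibility relation $\prec$ on $W$ that is converse well-founded: there is no infinite chain $w_0 \prec w_1 \prec \cdots$. Propositions: $A,B,C ::= Q \mid \bot \mid A \supset B \mid \Diamond A \mid \Box A$, $Q$ atomic. A context $\Gamma$ is a finite collection of judgments $A[w]$ ($w \in W$). Both judgments below are defined one world at a time (provability at $w$ after provability at all worlds reachable from $w$ by one or more $\prec$-steps; well-defined by converse well-foundedness), each as the least relation closed under its rules; premises may be meta-level universal quantifications and implications. Natural deduction $\Gamma \vdash_{\mathbf{CPL}} A[w]$: (hyp) $\Gamma, A[w] \vdash A[w]$. ($\bot E$) $\Gamma \vdash \bot[w]$ implies $\Gamma \vdash C[w]$. ($\supset I$) $\Gamma, A[w] \vdash B[w]$ implies $\Gamma \vdash A \supset B[w]$. ($\supset E$) $\Gamma \vdash A \supset B[w]$ and $\Gamma \vdash A[w]$ imply $\Gamma \vdash B[w]$. ($\Diamond I$) $w \prec w'$ and $\Gamma \vdash A[w']$ imply $\Gamma \vdash \Diamond A[w]$. ($\Box I$) if $\Gamma \vdash A[w']$ for all $w'$ with $w \prec w'$ then $\Gamma \vdash \Box A[w]$. ($\Diamond E$) if $\Gamma \vdash \Diamond A[w]$ and for all $w'$ with $w\prec w'$, $\Gamma \vdash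 A[w']$ implies $\Gamma \vdash C[w]$, then $\Gamma \vdash C[w]$. ($\Box E$) if $\Gamma \vdash \Box A[w]$ and ($\Gamma \vdash A[w']$ for all $w'$ with $w \prec w'$) implies $\Gamma \vdash C[w]$, then $\Gamma \vdash C[w]$. Sequent calculus $\Gamma \Rightarrow A[w]$: (init) $\Gamma, Q[w] \Rightarrow Q[w]$ for $Q$ atomic. ($\bot L$) $\bot[w]\in\Gamma$ implies $\Gamma \Rightarrow C[w]$. ($\supset R$) $\Gamma, A[w] \Rightarrow B[w]$ implies $\Gamma \Rightarrow A \supset B[w]$. ($\supset L$) $A\supset B[w] \in \Gamma$, $\Gamma \Rightarrow A[w]$ and $\Gamma, B[w] \Rightarrow C[w]$ imply $\Gamma \Rightarrow C[w]$. ($\Diamond R$) $w\prec w'$ and $\Gamma \Rightarrow A[w']$ imply $\Gamma \Rightarrow \Diamond A[w]$. ($\Box R$) if $\Gamma \Rightarrow A[w']$ for all $w'$ with $w \prec w'$ then $\Gamma \Rightarrow \Box A[w]$. ($\Diamond L$) if $\Diamond A[w]\in\Gamma$ and for all $w'$ with $w \prec w'$, $\Gamma \Rightarrow A[w']$ implies $\Gamma \Rightarrow C[w]$, then $\Gamma \Rightarrow C[w]$. ($\Box L$) if $\Box A[w]\in\Gamma$ and ($\Gamma \Rightarrow A[w']$ for all $w'$ with $w\prec w'$) implies $\Gamma \Rightarrow C[w]$, then $\Gamma \Rightarrow C[w]$. *)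

theory Defs
  imports Main "HOL-Library.Multiset"
begin

datatype 'q form = Atom 'q | Bot | Imp "'q form" "'q form" | Dia "'q form" | Box "'q form"

text \<open>A judgment A[w] is a pair (A, w); a context is a finite multiset of judgments.\<close>
type_synonym ('q, 'w) ctx = "('q form \<times> 'w) multiset"

text \<open>Natural deduction at a single world w, given provability H at the other worlds
  (only used at worlds reachable from w by one step).\<close>
inductive nd_at :: "('w \<Rightarrow> 'w \<Rightarrow> bool) \<Rightarrow> ('w \<Rightarrow> ('q, 'w) ctx \<Rightarrow> 'q form \<Rightarrow> bool) \<Rightarrow> 'w
    \<Rightarrow> ('q, 'w) ctx \<Rightarrow> 'q form \<Rightarrow> bool"
  for R H w where
  hyp: "nd_at R H w (add_mset (A, w) \<Gamma>) A"
| botE: "nd_at R H w \<Gamma> Bot \<Longrightarrow> nd_at R H w \<Gamma> C"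
| impI: "nd_at R H w (add_mset (A, w) \<Gamma>) B \<Longrightarrow> nd_at R H w \<Gamma> (Imp A B)"
| impE: "nd_at R H w \<Gamma> (Imp A B) \<Longrightarrow> nd_at R H w \<Gamma> A \<Longrightarrow> nd_at R H w \<Gamma> B"
| diaI: "R w w' \<Longrightarrow> H w' \<Gamma> A \<Longrightarrow> nd_at R H w \<Gamma> (Dia A)"
| boxI: "(\<forall>w'. R w w' \<longrightarrow> H w' \<Gamma> A) \<Longrightarrow> nd_at R H w \<Gamma> (Box A)"
| diaE: "nd_at R H w \<Gamma> (Dia A) \<Longrightarrow> (\<forall>w'. R w w' \<longrightarrow> H w' \<Gamma> A \<longrightarrow> nd_at R H w \<Gamma> C)
         \<Longrightarrow> nd_at R H w \<Gamma> C"
| boxE: "nd_at R H w \<Gamma> (Box A) \<Longrightarrow> ((\<forall>w'. R w w' \<longrightarrow> H w' \<Gamma> A) \<longrightarrow> nd_at R H w \<Gamma> C)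
         \<Longrightarrow> nd_at R H w \<Gamma> C"

inductive sq_at :: "('w \<Rightarrow> 'w \<Rightarrow> bool) \<Rightarrow> ('w \<Rightarrow> ('q, 'w) ctx \<Rightarrow> 'q form \<Rightarrow> bool) \<Rightarrow> 'w
    \<Rightarrow> ('q, 'w) ctx \<Rightarrow> 'q form \<Rightarrow> bool"
  for R H w where
  init: "sq_at R H w (add_mset (Atom Q, w) \<Gamma>) (Atom Q)"
| botL: "(Bot, w) \<in># \<Gamma> \<Longrightarrow> sq_at R H w \<Gamma> C"
| impR: "sq_at R H w (add_mset (A, w) \<Gamma>) B \<Longrightarrow> sq_at R H w \<Gamma> (Imp A B)"
| impL: "(Imp A B, w) \<in># \<Gamma> \<Longrightarrow> sq_at R H w \<Gamma> A \<Longrightarrow> sq_at R H w (add_mset (B, w) \<Gamma>) C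
         \<Longrightarrow> sq_at R H w \<Gamma> C"
| diaR: "R w w' \<Longrightarrow> H w' \<Gamma> A \<Longrightarrow> sq_at R H w \<Gamma> (Dia A)"
| boxR: "(\<forall>w'. R w w' \<longrightarrow> H w' \<Gamma> A) \<Longrightarrow> sq_at R H w \<Gamma> (Box A)"
| diaL: "(Dia A, w) \<in># \<Gamma> \<Longrightarrow> (\<forall>w'. R w w' \<longrightarrow> H w' \<Gamma> A \<longrightarrow> sq_at R H w \<Gamma> C)
         \<Longrightarrow> sq_at R H w \<Gamma> C"
| boxL: "(Box A, w) \<in># \<Gamma> \<Longrightarrow> ((\<forall>w'. R w w' \<longrightarrow> H w' \<Gamma> A) \<longrightarrow> sq_at R H w \<Gamma> C)
         \<Longrightarrow> sq_at R H w \<Gamma> C"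

text \<open>The successor relation as a well-founded order: w' is below w iff w \<prec> w'.\<close>
definition succ_rel :: "('w \<Rightarrow> 'w \<Rightarrow> bool) \<Rightarrow> ('w \<times> 'w) set" where
  "succ_rel R = {(w', w). R w w'}"

definition ND :: "('w \<Rightarrow> 'w \<Rightarrow> bool) \<Rightarrow> ('q, 'w) ctx \<Rightarrow> 'q form \<Rightarrow> 'w \<Rightarrow> bool" where
  "ND R \<Gamma> A w = wfrec (succ_rel R) (\<lambda>H v. nd_at R H v) w \<Gamma> A"

definition SQ :: "('w \<Rightarrow> 'w \<Rightarrow> bool) \<Rightarrow> ('q, 'w) ctx \<Rightarrow> 'q form \<Rightarrow> 'w \<Rightarrow> bool" where
  "SQ R \<Gamma> A w = wfrec (succ_rel R) (\<lambda>H v. sq_at R H v) w \<Gamma> A"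

end

theory Submission
  imports Defs
begin

text \<open>Sequent derivations are natural deduction derivations once every left rule is read as
  an elimination applied to a hypothesis. Conversely, the natural deduction rules become
  admissible in the sequent calculus at a world w once cut at w is: cut elimination proceeds
  by the usual induction on the cut formula and on the derivation of the right premise, and
  the only new ingredient is that sequents at worlds after w ignore hypotheses located at w.
  This holds because by converse well-foundedness w cannot be reached again from them.
  Both judgments then agree world by world by well-founded induction.\<close>

lemma nd_at_cong:
  assumes "\<And>v. R w v \<Longrightarrow> H1 v = H2 v"
  shows "nd_at R H1 w \<Gamma> A \<longleftrightarrow> nd_at R H2 w \<Gamma> A"
proof -
  have transfer: "nd_at R H2 w \<Gamma> A"
    if "nd_at R H1 w \<Gamma> A" "\<And>v. R w v \<Longrightarrow> H1 v = H2 v" for H1 H2 \<Gamma> A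
    using that(1) by induction (auto intro: nd_at.intros simp: that(2))
  show ?thesis
    by (intro iffI) (erule transfer; simp add: assms)+
qed

lemma sq_at_cong:
  assumes "\<And>v. R w v \<Longrightarrow> H1 v = H2 v"
  shows "sq_at R H1 w \<Gamma> A \<longleftrightarrow> sq_at R H2 w \<Gamma> A"
proof -
  have transfer: "sq_at R H2 w \<Gamma> A"
    if "sq_at R H1 w \<Gamma> A" "\<And>v. R w v \<Longrightarrow> H1 v = H2 v" for H1 H2 \<Gamma> A
    using that(1) by induction (auto intro: sq_at.intros simp: that(2))
  show ?thesis
    by (intro iffI) (erule transfer; simp add: assms)+
qed

lemma ND_unfold:
  assumes "wf (succ_rel R)"
  shows "ND R \<Gamma> A w = nd_at R (\<lambda>v \<Gamma> A. ND R \<Gamma> A v) w \<Gamma> A"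
proof -
  have "ND R \<Gamma> A w = nd_at R (cut (wfrec (succ_rel R) (nd_at R)) (succ_rel R) w) w \<Gamma> A"
    unfolding ND_def by (subst wfrec[OF assms]) simp
  also have "\<dots> = nd_at R (\<lambda>v \<Gamma> A. ND R \<Gamma> A v) w \<Gamma> A"
    by (rule nd_at_cong) (auto simp: cut_apply succ_rel_def ND_def)
  finally show ?thesis .
qed

lemma SQ_unfold:
  assumes "wf (succ_rel R)"
  shows "SQ R \<Gamma> A w = sq_at R (\<lambda>v \<Gamma> A. SQ R \<Gamma> A v) w \<Gamma> A"
proof -
  have "SQ R \<Gamma> A w = sq_at R (cut (wfrec (succ_rel R) (sq_at R)) (succ_rel R) w) w \<Gamma> A"
    unfolding SQ_def by (subst wfrec[OF assms]) simp
  also have "\<dots> = sq_at R (\<lambda>v \<Gamma> A. SQ R \<Gamma> A v) w \<Gamma> A"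
    by (rule sq_at_cong) (auto simp: cut_apply succ_rel_def SQ_def)
  finally show ?thesis .
qed

lemma nd_at_hyp: "(A, w) \<in># \<Gamma> \<Longrightarrow> nd_at R H w \<Gamma> A"
  by (metis mset_add nd_at.hyp)

lemma sq_at_imp_nd_at: "sq_at R H w \<Gamma> A \<Longrightarrow> nd_at R H w \<Gamma> A"
proof (induction rule: sq_at.induct)
  case (init Q \<Gamma>)
  then show ?case by (rule nd_at.hyp)
next
  case (botL \<Gamma> C)
  then show ?case by (rule nd_at.botE[OF nd_at_hyp])
next
  case (impR A \<Gamma> B)
  show ?case by (rule nd_at.impI) (fact impR.IH)
next
  case (impL A B \<Gamma> C)
  have "nd_at R H w \<Gamma> B"
    by (rule nd_at.impE[OF nd_at_hyp]) (use impL in simp_all)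
  moreover have "nd_at R H w \<Gamma> (Imp B C)"
    by (rule nd_at.impI) (use impL in simp)
  ultimately show ?case by (rule nd_at.impE[rotated])
next
  case (diaR w' \<Gamma> A)
  then show ?case by (rule nd_at.diaI)
next
  case (boxR \<Gamma> A)
  then show ?case by (rule nd_at.boxI)
next
  case (diaL A \<Gamma> C)
  show ?case by (rule nd_at.diaE[OF nd_at_hyp]) (use diaL in auto)
next
  case (boxL A \<Gamma> C)
  show ?case by (rule nd_at.boxE[OF nd_at_hyp]) (use boxL in auto)
qed

lemma sq_at_init: "(Atom Q, w) \<in># \<Gamma> \<Longrightarrow> sq_at R H w \<Gamma> (Atom Q)"
  by (metis mset_add sq_at.init)

lemma sq_at_weaken:
  assumes "sq_at R H w \<Gamma> C"
    and "\<And>v \<Gamma> B. R w v \<Longrightarrow> H v (add_mset d \<Gamma>) B = H v \<Gamma> B"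
  shows "sq_at R H w (add_mset d \<Gamma>) C"
  using assms(1)
proof (induction rule: sq_at.induct)
  case (init Q \<Gamma>)
  then show ?case by (intro sq_at_init) simp
next
  case (botL \<Gamma> C)
  show ?case by (rule sq_at.botL) (use botL in simp)
next
  case (impR A \<Gamma> B)
  then show ?case by (intro sq_at.impR) (simp add: add_mset_commute)
next
  case (impL A B \<Gamma> C)
  show ?case by (rule sq_at.impL[of A B]) (use impL in \<open>simp_all add: add_mset_commute\<close>)
next
  case (diaR w' \<Gamma> A)
  then show ?case using assms(2) by (intro sq_at.diaR) auto
next
  case (boxR \<Gamma> A)
  then show ?case using assms(2) by (intro sq_at.boxR) auto
next
  case (diaL A \<Gamma> C)
  show ?case by (rule sq_at.diaL[of A]) (use diaL assms(2) in auto)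
next
  case (boxL A \<Gamma> C)
  show ?case by (rule sq_at.boxL[of A]) (use boxL assms(2) in auto)
qed

lemma sq_at_strengthen:
  assumes "sq_at R H w (add_mset d \<Gamma>) C" and "snd d \<noteq> w"
    and "\<And>v \<Gamma> B. R w v \<Longrightarrow> H v (add_mset d \<Gamma>) B = H v \<Gamma> B"
  shows "sq_at R H w \<Gamma> C"
  using assms(1)
proof (induction "add_mset d \<Gamma>" C arbitrary: \<Gamma> rule: sq_at.induct)
  case (init Q \<Gamma>' \<Gamma>)
  then have "(Atom Q, w) \<in># add_mset d \<Gamma>"
    by (metis union_single_eq_member)
  then show ?case using assms(2) by (intro sq_at_init) auto
next
  case (botL C \<Gamma>)
  show ?case by (rule sq_at.botL) (use botL assms(2) in auto)
next
  case (impR A B \<Gamma>)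
  then show ?case by (intro sq_at.impR) (simp add: add_mset_commute)
next
  case (impL A B C \<Gamma>)
  show ?case by (rule sq_at.impL[of A B]) (use impL assms(2) in \<open>auto simp: add_mset_commute\<close>)
next
  case (diaR w' A \<Gamma>)
  then show ?case using assms(3) by (intro sq_at.diaR) auto
next
  case (boxR A \<Gamma>)
  then show ?case using assms(3) by (intro sq_at.boxR) auto
next
  case (diaL A C \<Gamma>)
  show ?case by (rule sq_at.diaL[of A]) (use diaL assms(2,3) in auto)
next
  case (boxL A C \<Gamma>)
  show ?case by (rule sq_at.boxL[of A]) (use boxL assms(2,3) in auto)
qed

lemma sq_at_hyp: "(A, w) \<in># \<Gamma> \<Longrightarrow> sq_at R H w \<Gamma> A"
proof (induction A arbitrary: \<Gamma>)
  case (Atom Q)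
  then show ?case by (rule sq_at_init)
next
  case Bot
  then show ?case by (rule sq_at.botL)
next
  case (Imp P Q)
  show ?case by (rule sq_at.impR, rule sq_at.impL[of P Q]) (use Imp in simp_all)
next
  case (Dia B)
  show ?case by (rule sq_at.diaL[of B]) (use Dia in \<open>auto intro: sq_at.diaR\<close>)
next
  case (Box B)
  show ?case by (rule sq_at.boxL[of B]) (use Box in \<open>auto intro: sq_at.boxR\<close>)
qed

lemma sq_at_Bot_elim:
  fixes C :: "'q form"
  shows "sq_at R H w \<Gamma> (Bot :: 'q form) \<Longrightarrow> sq_at R H w \<Gamma> C"
proof (induction \<Gamma> "Bot :: 'q form" rule: sq_at.induct)
  case (botL \<Gamma>)
  then show ?case by (rule sq_at.botL)
next
  case (impL A B \<Gamma>)
  show ?case by (rule sq_at.impL[of A B]) (use impL in simp_all)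
next
  case (diaL A \<Gamma>)
  show ?case by (rule sq_at.diaL[of A]) (use diaL in auto)
next
  case (boxL A \<Gamma>)
  show ?case by (rule sq_at.boxL[of A]) (use boxL in auto)
qed

locale successors_ignore_hyps =
  fixes R :: "'w \<Rightarrow> 'w \<Rightarrow> bool" and H :: "'w \<Rightarrow> ('q, 'w) ctx \<Rightarrow> 'q form \<Rightarrow> bool"
    and w :: 'w
  assumes successors_ignore_hyps: "R w v \<Longrightarrow> H v (add_mset (D, w) \<Gamma>) B = H v \<Gamma> B"
begin

lemma sq_at_add_local_hyp: "sq_at R H w \<Gamma> C \<Longrightarrow> sq_at R H w (add_mset (D, w) \<Gamma>) C"
  by (erule sq_at_weaken) (rule successors_ignore_hyps)

lemma sq_at_Imp_inv: "sq_at R H w \<Gamma> (Imp P Q) \<Longrightarrow> sq_at R H w (add_mset (P, w) \<Gamma>) Q"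
proof (induction \<Gamma> "Imp P Q" rule: sq_at.induct)
  case (botL \<Gamma>)
  show ?case by (rule sq_at.botL) (use botL in simp)
next
  case (impR \<Gamma>)
  then show ?case by simp
next
  case (impL A B \<Gamma>)
  show ?case
    by (rule sq_at.impL[of A B])
      (use impL sq_at_add_local_hyp in \<open>simp_all add: add_mset_commute\<close>)
next
  case (diaL A \<Gamma>)
  show ?case by (rule sq_at.diaL[of A]) (use diaL successors_ignore_hyps in auto)
next
  case (boxL A \<Gamma>)
  show ?case by (rule sq_at.boxL[of A]) (use boxL successors_ignore_hyps in auto)
qed

lemma sq_at_Dia_elim:
  "sq_at R H w \<Gamma> (Dia B) \<Longrightarrow> (\<And>w'. R w w' \<Longrightarrow> H w' \<Gamma> B \<Longrightarrow> sq_at R H w \<Gamma> C)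
    \<Longrightarrow> sq_at R H w \<Gamma> C"
proof (induction \<Gamma> "Dia B" rule: sq_at.induct)
  case (botL \<Gamma>)
  show ?case by (rule sq_at.botL) (fact botL(1))
next
  case (diaR w' \<Gamma>)
  then show ?case by simp
next
  case (impL A B' \<Gamma>)
  show ?case
    by (rule sq_at.impL[of A B'])
      (use impL successors_ignore_hyps in \<open>auto intro: sq_at_add_local_hyp\<close>)
next
  case (diaL A \<Gamma>)
  show ?case by (rule sq_at.diaL[of A]) (use diaL in auto)
next
  case (boxL A \<Gamma>)
  show ?case by (rule sq_at.boxL[of A]) (use boxL in auto)
qed

lemma sq_at_Box_elim:
  "sq_at R H w \<Gamma> (Box B) \<Longrightarrow> ((\<And>w'. R w w' \<Longrightarrow> H w' \<Gamma> B) \<Longrightarrow> sq_at R H w \<Gamma> C)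
    \<Longrightarrow> sq_at R H w \<Gamma> C"
proof (induction \<Gamma> "Box B" rule: sq_at.induct)
  case (botL \<Gamma>)
  show ?case by (rule sq_at.botL) (fact botL(1))
next
  case (boxR \<Gamma>)
  then show ?case by simp
next
  case (impL A B' \<Gamma>)
  show ?case
    by (rule sq_at.impL[of A B'])
      (use impL successors_ignore_hyps in \<open>auto intro: sq_at_add_local_hyp\<close>)
next
  case (diaL A \<Gamma>)
  show ?case by (rule sq_at.diaL[of A]) (use diaL in auto)
next
  case (boxL A \<Gamma>)
  show ?case by (rule sq_at.boxL[of A]) (use boxL in auto)
qed

definition cut_admissible :: "'q form \<Rightarrow> bool" where
  "cut_admissible A \<longleftrightarrow>
    (\<forall>\<Gamma> C. sq_at R H w \<Gamma> A \<longrightarrow> sq_at R H w (add_mset (A, w) \<Gamma>) C \<longrightarrow> sq_at R H w \<Gamma> C)"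

lemma cut_Imp_principal:
  assumes "cut_admissible P" "cut_admissible Q" "sq_at R H w \<Gamma> (Imp P Q)"
    and "sq_at R H w \<Gamma> P" "sq_at R H w (add_mset (Q, w) \<Gamma>) C"
  shows "sq_at R H w \<Gamma> C"
proof -
  from assms(3) have "sq_at R H w (add_mset (P, w) \<Gamma>) Q" by (rule sq_at_Imp_inv)
  with assms(1,4) have "sq_at R H w \<Gamma> Q" unfolding cut_admissible_def by blast
  with assms(2,5) show ?thesis unfolding cut_admissible_def by blast
qed

lemma cut_admissible_step:
  assumes IH: "\<And>P Q. A = Imp P Q \<Longrightarrow> cut_admissible P \<and> cut_admissible Q"
  shows "cut_admissible A"
proof -
  have "sq_at R H w \<Gamma> C"
    if "sq_at R H w \<Gamma>' C" "\<Gamma>' = add_mset (A, w) \<Gamma>" "sq_at R H w \<Gamma> A" for \<Gamma>' \<Gamma> C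
    using that
  proof (induction arbitrary: \<Gamma> rule: sq_at.induct)
    case (init Q \<Delta> \<Gamma>)
    have "(Atom Q, w) \<in># add_mset (A, w) \<Gamma>"
      by (metis init.prems(1) union_single_eq_member)
    then have "A = Atom Q \<or> (Atom Q, w) \<in># \<Gamma>" by auto
    then show ?case using init.prems(2) by (auto intro: sq_at_init)
  next
    case (botL \<Delta> C \<Gamma>)
    then have "A = Bot \<or> (Bot, w) \<in># \<Gamma>" by auto
    then show ?case using botL.prems(2) by (auto intro: sq_at.botL sq_at_Bot_elim)
  next
    case (impR A' \<Delta> B \<Gamma>)
    have "sq_at R H w (add_mset (A', w) \<Gamma>) B"
      using impR by (auto intro: impR.IH sq_at_add_local_hyp simp: add_mset_commute)
    then show ?case by (rule sq_at.impR)
  next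
    case (impL P Q \<Delta> C \<Gamma>)
    have left: "sq_at R H w \<Gamma> P" using impL by blast
    have right: "sq_at R H w (add_mset (Q, w) \<Gamma>) C"
      using impL by (auto intro: impL.IH(2) sq_at_add_local_hyp simp: add_mset_commute)
    from impL have "A = Imp P Q \<or> (Imp P Q, w) \<in># \<Gamma>" by auto
    then show ?case
      using IH impL.prems(2) cut_Imp_principal sq_at.impL[OF _ left right] left right by blast
  next
    case (diaR w' \<Delta> B \<Gamma>)
    \<comment> \<open>The cut formula lives at w, so premises at successors of w never used it.\<close>
    show ?case
      by (rule sq_at.diaR[of R w w', OF diaR(1)])
        (use diaR successors_ignore_hyps in simp)
  next
    case (boxR \<Delta> B \<Gamma>)
    show ?case by (rule sq_at.boxR) (use boxR successors_ignore_hyps in simp)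
  next
    case (diaL B \<Delta> C \<Gamma>)
    have premise: "\<forall>w'. R w w' \<longrightarrow> H w' \<Gamma> B \<longrightarrow> sq_at R H w \<Gamma> C"
      using diaL successors_ignore_hyps by simp
    from diaL have "A = Dia B \<or> (Dia B, w) \<in># \<Gamma>" by auto
    with diaL.prems(2) premise show ?case using sq_at.diaL[OF _ premise] sq_at_Dia_elim by blast
  next
    case (boxL B \<Delta> C \<Gamma>)
    have premise: "(\<forall>w'. R w w' \<longrightarrow> H w' \<Gamma> B) \<longrightarrow> sq_at R H w \<Gamma> C"
      using boxL successors_ignore_hyps by simp
    from boxL have "A = Box B \<or> (Box B, w) \<in># \<Gamma>" by auto
    with boxL.prems(2) premise show ?case using sq_at.boxL[OF _ premise] sq_at_Box_elim by blast
  qed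
  then show ?thesis unfolding cut_admissible_def by blast
qed

lemma cut_admissible: "cut_admissible A"
  by (induction A) (auto intro: cut_admissible_step)

lemma sq_at_cut: "sq_at R H w \<Gamma> A \<Longrightarrow> sq_at R H w (add_mset (A, w) \<Gamma>) C \<Longrightarrow> sq_at R H w \<Gamma> C"
  using cut_admissible by (simp add: cut_admissible_def)

lemma nd_at_imp_sq_at: "nd_at R H w \<Gamma> A \<Longrightarrow> sq_at R H w \<Gamma> A"
proof (induction rule: nd_at.induct)
  case (hyp A \<Gamma>)
  show ?case by (rule sq_at_hyp) simp
next
  case (botE \<Gamma> C)
  show ?case by (rule sq_at_Bot_elim[OF botE.IH])
next
  case (impI A \<Gamma> B)
  show ?case by (rule sq_at.impR) (fact impI.IH)
next
  case (impE \<Gamma> A B)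
  then show ?case by (blast intro: sq_at_cut sq_at_Imp_inv)
next
  case (diaI w' \<Gamma> A)
  then show ?case by (rule sq_at.diaR)
next
  case (boxI \<Gamma> A)
  then show ?case by (rule sq_at.boxR)
next
  case (diaE \<Gamma> A C)
  then show ?case by (blast intro: sq_at_Dia_elim)
next
  case (boxE \<Gamma> A C)
  then show ?case by (blast intro: sq_at_Box_elim)
qed

lemma nd_at_iff_sq_at: "nd_at R H w \<Gamma> A \<longleftrightarrow> sq_at R H w \<Gamma> A"
  by (rule iffI) (erule nd_at_imp_sq_at, erule sq_at_imp_nd_at)

end

lemma SQ_add_mset_unreachable:
  assumes wf: "wf (succ_rel R)" and "(u, v) \<notin> (succ_rel R)\<^sup>*"
  shows "SQ R (add_mset (D, u) \<Gamma>) B v = SQ R \<Gamma> B v"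
  using wf assms(2)
proof (induction v arbitrary: \<Gamma> B rule: wf_induct_rule)
  case (less v \<Gamma> B)
  have succ: "SQ R (add_mset (D, u) \<Gamma>') B' v' = SQ R \<Gamma>' B' v'" if "R v v'" for v' \<Gamma>' B'
  proof -
    from that have "(v', v) \<in> succ_rel R" by (simp add: succ_rel_def)
    moreover from this less.prems have "(u, v') \<notin> (succ_rel R)\<^sup>*"
      by (meson rtrancl_into_rtrancl)
    ultimately show ?thesis by (rule less.IH)
  qed
  from less.prems have other_world: "snd (D, u) \<noteq> v" by auto
  have "sq_at R (\<lambda>v \<Gamma> A. SQ R \<Gamma> A v) v (add_mset (D, u) \<Gamma>) B
      \<longleftrightarrow> sq_at R (\<lambda>v \<Gamma> A. SQ R \<Gamma> A v) v \<Gamma> B"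
  proof
    assume "sq_at R (\<lambda>v \<Gamma> A. SQ R \<Gamma> A v) v (add_mset (D, u) \<Gamma>) B"
    then show "sq_at R (\<lambda>v \<Gamma> A. SQ R \<Gamma> A v) v \<Gamma> B"
      by (rule sq_at_strengthen[OF _ other_world]) (simp add: succ)
  next
    assume "sq_at R (\<lambda>v \<Gamma> A. SQ R \<Gamma> A v) v \<Gamma> B"
    then show "sq_at R (\<lambda>v \<Gamma> A. SQ R \<Gamma> A v) v (add_mset (D, u) \<Gamma>) B"
      by (rule sq_at_weaken) (simp add: succ)
  qed
  then show ?case by (simp only: SQ_unfold[OF wf, of _ _ v])
qed

lemma successors_ignore_hyps_SQ:
  assumes wf: "wf (succ_rel R)"
  shows "successors_ignore_hyps R (\<lambda>v \<Gamma> A. SQ R \<Gamma> A v) w"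
proof
  fix v D \<Gamma> B
  assume "R w v"
  then have "(v, w) \<in> succ_rel R" by (simp add: succ_rel_def)
  with wf_acyclic[OF wf] have "(w, v) \<notin> (succ_rel R)\<^sup>*"
    by (meson acyclic_def rtrancl_into_trancl1)
  then show "SQ R (add_mset (D, w) \<Gamma>) B v = SQ R \<Gamma> B v"
    by (rule SQ_add_mset_unreachable[OF wf])
qed

theorem theorem3:
  fixes R :: "'w \<Rightarrow> 'w \<Rightarrow> bool"
  assumes "wf (succ_rel R)"
  shows "ND R \<Gamma> A w \<longleftrightarrow> SQ R \<Gamma> A w"
  using assms
proof (induction w arbitrary: \<Gamma> A rule: wf_induct_rule)
  case (less w \<Gamma> A)
  interpret successors_ignore_hyps R "\<lambda>v \<Gamma> A. SQ R \<Gamma> A v" w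
    using assms by (rule successors_ignore_hyps_SQ)
  have "ND R \<Gamma> A w \<longleftrightarrow> nd_at R (\<lambda>v \<Gamma> A. ND R \<Gamma> A v) w \<Gamma> A"
    using assms by (rule ND_unfold)
  also have "\<dots> \<longleftrightarrow> nd_at R (\<lambda>v \<Gamma> A. SQ R \<Gamma> A v) w \<Gamma> A"
    by (rule nd_at_cong) (use less.IH in \<open>auto simp: succ_rel_def fun_eq_iff\<close>)
  also have "\<dots> \<longleftrightarrow> sq_at R (\<lambda>v \<Gamma> A. SQ R \<Gamma> A v) w \<Gamma> A"
    by (rule nd_at_iff_sq_at)
  also have "\<dots> \<longleftrightarrow> SQ R \<Gamma> A w"
    using assms by (rule SQ_unfold[symmetric])
  finally show ?case .
qed

end
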